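(* Let $\mathit{VI}$ be a finite set of variables with $\#\mathit{VI}=n$. If $j,k\in\mathbb{N}$ with $1\le j<k\le n$, then $\mathrm{MI}(\mathit{TSD}_k)\cap\mathit{TSD}_j=\mathrm{dAtoms}(\mathit{TSD}_j)$.
   Context: $\mathit{SG}=\wp(\mathit{VI})\setminus\{\emptyset\}$, $\mathit{SH}=\wp(\mathit{SG})$ ordered by inclusion. For $1\le m\le n$, $\rho_{\mathit{TSD}_m}(sh)=\{\,S\in\mathit{SG}\mid \forall T\subseteq S:\ \#T<m\implies S=\bigcup\{U\in sh\mid T\subseteq U\subseteq S\}\,\}$ and $\mathit{TSD}_m=\rho_{\mathit{TSD}_m}(\mathit{SH})$, a complete lattice under inclusion (meet = intersection, top $\mathit{SG}$). $\mathrm{MI}(C)$: meet-irreducible elements of $C$ ($x=y\wedge z\Rightarrow x=y$ or $x=z$); $\mathrm{dAtoms}(C)$: dual-atoms ($x\ne\top$ with $x\le y<\top\Rightarrow x=y$). *)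

theory Defs
  imports Main
begin

definition SG :: "'a set \<Rightarrow> 'a set set" where
  "SG VI = Pow VI - {{}}"

definition SH :: "'a set \<Rightarrow> 'a set set set" where
  "SH VI = Pow (SG VI)"

definition rho_TSD :: "nat \<Rightarrow> 'a set \<Rightarrow> 'a set set \<Rightarrow> 'a set set" where
  "rho_TSD m VI sh = {S \<in> SG VI. \<forall>T. T \<subseteq> S \<longrightarrow> card T < m \<longrightarrow>
       S = \<Union>{U \<in> sh. T \<subseteq> U \<and> U \<subseteq> S}}"

definition TSD :: "nat \<Rightarrow> 'a set \<Rightarrow> 'a set set set" where
  "TSD m VI = rho_TSD m VI ` SH VI"

definition MI :: "'b set set \<Rightarrow> 'b set \<Rightarrow> 'b set set" where
  "MI C tp = {x \<in> C. x \<noteq> tp \<and>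
      (\<forall>y\<in>C. \<forall>z\<in>C. x = y \<inter> z \<longrightarrow> x = y \<or> x = z)}"

definition dAtoms :: "'b set set \<Rightarrow> 'b set \<Rightarrow> 'b set set" where
  "dAtoms C tp = {x \<in> C. x \<noteq> tp \<and> (\<forall>y\<in>C. x \<subseteq> y \<and> y \<noteq> tp \<longrightarrow> x = y)}"

end

theory Submission
  imports Defs
begin

text \<open>Every element x \<noteq> SG of TSD_j misses some generator S with card S \<le> j: a
  missing generator of minimal size larger than j would be recovered by \<rho>_j from its
  proper nonempty subsets, which all lie in x. For such S, SG - {S} belongs to
  TSD_m for every m \<ge> card S, because \<rho>_m never adds a generator of size at most m;
  these sets are exactly the dual atoms of TSD_j, and they are meet-irreducible in
  every lattice of sets containing them. Conversely, if x \<in> TSD_j misses S and j < k,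
  then \<rho>_k (insert S x) adds nothing to x except S (a subset T with card T < j is
  enlarged by one point to stay below k), so x is the meet of SG - {S} and
  \<rho>_k (insert S x) in TSD_k; meet-irreducibility then forces x = SG - {S}.\<close>

lemma Union_eq_iff_covered:
  "S = \<Union>{U \<in> sh. P U \<and> U \<subseteq> S} \<longleftrightarrow> (\<forall>a\<in>S. \<exists>U\<in>sh. P U \<and> U \<subseteq> S \<and> a \<in> U)"
  by blast

lemma rho_TSD_covers:
  assumes "S \<in> rho_TSD m VI sh" and "T \<subseteq> S" and "card T < m" and "a \<in> S"
  shows "\<exists>U\<in>sh. T \<subseteq> U \<and> U \<subseteq> S \<and> a \<in> U"
proof -
  have "S = \<Union>{U \<in> sh. T \<subseteq> U \<and> U \<subseteq> S}"
    using assms(1-3) unfolding rho_TSD_def by blast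
  with assms(4) show ?thesis
    unfolding Union_eq_iff_covered by blast
qed

lemma rho_TSD_memI:
  assumes "S \<in> SG VI"
    and "\<And>T a. T \<subseteq> S \<Longrightarrow> card T < m \<Longrightarrow> a \<in> S \<Longrightarrow> \<exists>U\<in>sh. T \<subseteq> U \<and> U \<subseteq> S \<and> a \<in> U"
  shows "S \<in> rho_TSD m VI sh"
  using assms unfolding rho_TSD_def mem_Collect_eq Union_eq_iff_covered by blast

lemma rho_TSD_subset_SG: "rho_TSD m VI sh \<subseteq> SG VI"
  unfolding rho_TSD_def by blast

lemma rho_TSD_extensive: "sh \<subseteq> SG VI \<Longrightarrow> sh \<subseteq> rho_TSD m VI sh"
  unfolding rho_TSD_def by blast

lemma rho_TSD_idem: "rho_TSD m VI (rho_TSD m VI sh) = rho_TSD m VI sh"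
proof
  show "rho_TSD m VI sh \<subseteq> rho_TSD m VI (rho_TSD m VI sh)"
    by (rule rho_TSD_extensive[OF rho_TSD_subset_SG])
  show "rho_TSD m VI (rho_TSD m VI sh) \<subseteq> rho_TSD m VI sh"
  proof
    fix S assume S: "S \<in> rho_TSD m VI (rho_TSD m VI sh)"
    show "S \<in> rho_TSD m VI sh"
    proof (rule rho_TSD_memI)
      show "S \<in> SG VI" using S rho_TSD_subset_SG by blast
      fix T a assume T: "T \<subseteq> S" "card T < m" and a: "a \<in> S"
      obtain U where U: "U \<in> rho_TSD m VI sh" "T \<subseteq> U" "U \<subseteq> S" "a \<in> U"
        using rho_TSD_covers[OF S T a] by blast
      then obtain V where "V \<in> sh" "T \<subseteq> V" "V \<subseteq> U" "a \<in> V"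
        using rho_TSD_covers[OF U(1,2) T(2) U(4)] by blast
      with U(3) show "\<exists>V\<in>sh. T \<subseteq> V \<and> V \<subseteq> S \<and> a \<in> V" by blast
    qed
  qed
qed

lemma TSD_iff_fixpoint: "x \<in> TSD m VI \<longleftrightarrow> rho_TSD m VI x = x"
proof
  show "x \<in> TSD m VI \<Longrightarrow> rho_TSD m VI x = x"
    unfolding TSD_def using rho_TSD_idem by blast
  assume "rho_TSD m VI x = x"
  moreover then have "x \<in> SH VI"
    unfolding SH_def using rho_TSD_subset_SG by blast
  ultimately show "x \<in> TSD m VI"
    unfolding TSD_def by (metis image_eqI)
qed

lemma TSD_subset_SG: "x \<in> TSD m VI \<Longrightarrow> x \<subseteq> SG VI"
  by (metis TSD_iff_fixpoint rho_TSD_subset_SG)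

lemma rho_TSD_in_TSD: "rho_TSD m VI sh \<in> TSD m VI"
  unfolding TSD_iff_fixpoint by (rule rho_TSD_idem)

lemma finite_SG_member: "finite VI \<Longrightarrow> S \<in> SG VI \<Longrightarrow> finite S"
  unfolding SG_def by (auto intro: finite_subset)

lemma rho_TSD_small_mem:
  assumes "S \<in> rho_TSD m VI sh" and "finite S" and "card S \<le> m"
  shows "S \<in> sh"
proof -
  have "S \<in> SG VI" using assms(1) rho_TSD_subset_SG by blast
  then obtain a where a: "a \<in> S" unfolding SG_def by blast
  have "card (S - {a}) < m"
    using card_Diff1_less[OF assms(2) a] assms(3) by linarith
  then obtain U where "U \<in> sh" "S - {a} \<subseteq> U" "U \<subseteq> S" "a \<in> U"
    using rho_TSD_covers[OF assms(1) Diff_subset _ a] by blast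
  then have "U = S" by auto
  with \<open>U \<in> sh\<close> show ?thesis by simp
qed

lemma large_mem_rho_TSD:
  assumes "S \<in> SG VI" and "finite S" and "m < card S"
    and proper: "\<And>U. U \<subset> S \<Longrightarrow> U \<noteq> {} \<Longrightarrow> U \<in> sh"
  shows "S \<in> rho_TSD m VI sh"
proof (rule rho_TSD_memI[OF assms(1)])
  fix T a assume T: "T \<subseteq> S" "card T < m" and a: "a \<in> S"
  have "card (S - T) = card S - card T"
    using T(1) assms(2) by (simp add: card_Diff_subset finite_subset)
  then have "1 < card (S - T)"
    using T(2) assms(3) by linarith
  moreover have "card (S - T) \<le> 1" if "S - T \<subseteq> {a}"
    using card_mono[OF _ that] by simp
  ultimately have "\<not> S - T \<subseteq> {a}" by linarith
  then obtain b where b: "b \<in> S - T" "b \<noteq> a" by blast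
  have "S - {b} \<in> sh"
    using a b by (intro proper) auto
  moreover have "T \<subseteq> S - {b}" "a \<in> S - {b}" using T(1) a b by auto
  ultimately show "\<exists>U\<in>sh. T \<subseteq> U \<and> U \<subseteq> S \<and> a \<in> U" by blast
qed

lemma TSD_misses_small_generator:
  assumes "finite VI" and x: "x \<in> TSD m VI" and "x \<noteq> SG VI"
  obtains S where "S \<in> SG VI" "S \<notin> x" "card S \<le> m"
proof -
  obtain S1 where "S1 \<in> SG VI - x"
    using TSD_subset_SG[OF x] assms(3) by blast
  then obtain S where S: "S \<in> SG VI - x"
    and least: "\<forall>S'. S' \<in> SG VI - x \<longrightarrow> card S \<le> card S'"
    using ex_has_least_nat[of "\<lambda>S. S \<in> SG VI - x" S1 card] by blast
  have fin: "finite S"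
    using finite_SG_member[OF assms(1)] S by blast
  have "card S \<le> m"
  proof (rule ccontr)
    assume "\<not> card S \<le> m"
    moreover have "U \<in> x" if "U \<subset> S" "U \<noteq> {}" for U
    proof -
      have "U \<in> SG VI" using S that unfolding SG_def by blast
      moreover have "card U < card S" using fin that by (simp add: psubset_card_mono)
      ultimately show ?thesis using least by fastforce
    qed
    ultimately have "S \<in> rho_TSD m VI x"
      using S fin by (intro large_mem_rho_TSD) auto
    with x S show False
      unfolding TSD_iff_fixpoint by blast
  qed
  with S that show thesis by blast
qed

lemma SG_Diff_small_in_TSD:
  assumes "finite VI" and "S \<in> SG VI" and "card S \<le> m"
  shows "SG VI - {S} \<in> TSD m VI"
  unfolding TSD_iff_fixpoint
proof
  show "SG VI - {S} \<subseteq> rho_TSD m VI (SG VI - {S})"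
    by (rule rho_TSD_extensive) blast
  have "S \<notin> rho_TSD m VI (SG VI - {S})"
    using rho_TSD_small_mem finite_SG_member[OF assms(1,2)] assms(3) by blast
  then show "rho_TSD m VI (SG VI - {S}) \<subseteq> SG VI - {S}"
    using rho_TSD_subset_SG by blast
qed

lemma rho_TSD_insert_subset:
  assumes "j < k"
  shows "rho_TSD k VI (insert S0 sh) - {S0} \<subseteq> rho_TSD j VI sh"
proof
  fix S assume "S \<in> rho_TSD k VI (insert S0 sh) - {S0}"
  then have S: "S \<in> rho_TSD k VI (insert S0 sh)" and "S \<noteq> S0" by auto
  show "S \<in> rho_TSD j VI sh"
  proof (rule rho_TSD_memI)
    show "S \<in> SG VI" using S rho_TSD_subset_SG by blast
    fix T a assume T: "T \<subseteq> S" "card T < j" and a: "a \<in> S"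
    have card_aT: "card (insert a T) < k"
      using T(2) assms card_insert_le_m1[of "k - 1" T a] by linarith
    have aT: "insert a T \<subseteq> S" using T(1) a by blast
    obtain c where c: "c \<in> S" "S0 \<subseteq> S \<Longrightarrow> c \<notin> S0"
      using \<open>S \<noteq> S0\<close> a by blast
    then obtain U where U: "U \<in> insert S0 sh" "insert a T \<subseteq> U" "U \<subseteq> S" "c \<in> U"
      using rho_TSD_covers[OF S aT card_aT c(1)] by blast
    have "U \<noteq> S0" using U(3,4) c(2) by blast
    with U show "\<exists>U\<in>sh. T \<subseteq> U \<and> U \<subseteq> S \<and> a \<in> U" by blast
  qed
qed

lemma Diff_singleton_in_MI:
  assumes "C \<subseteq> Pow A" and "A - {a} \<in> C" and "a \<in> A"
  shows "A - {a} \<in> MI C A"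
  unfolding MI_def
proof (intro CollectI conjI ballI impI)
  fix y z assume "y \<in> C" "z \<in> C" and meet: "A - {a} = y \<inter> z"
  then have "y \<subseteq> A" "z \<subseteq> A" using assms(1) by auto
  with meet show "A - {a} = y \<or> A - {a} = z" by blast
qed (use assms in auto)

lemma Diff_singleton_in_dAtoms:
  assumes "C \<subseteq> Pow A" and "A - {a} \<in> C" and "a \<in> A"
  shows "A - {a} \<in> dAtoms C A"
  unfolding dAtoms_def
proof (intro CollectI conjI ballI impI)
  fix y assume "y \<in> C" and above: "A - {a} \<subseteq> y \<and> y \<noteq> A"
  then have "y \<subseteq> A" using assms(1) by auto
  with above show "A - {a} = y" by blast
qed (use assms in auto)

lemma dAtoms_TSD:
  assumes "finite VI"
  shows "dAtoms (TSD m VI) (SG VI) = {SG VI - {S} | S. S \<in> SG VI \<and> card S \<le> m}"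
proof
  show "dAtoms (TSD m VI) (SG VI) \<subseteq> {SG VI - {S} | S. S \<in> SG VI \<and> card S \<le> m}"
  proof
    fix x assume "x \<in> dAtoms (TSD m VI) (SG VI)"
    then have x: "x \<in> TSD m VI" "x \<noteq> SG VI"
      and max: "\<And>y. y \<in> TSD m VI \<Longrightarrow> x \<subseteq> y \<and> y \<noteq> SG VI \<Longrightarrow> x = y"
      unfolding dAtoms_def by auto
    obtain S where S: "S \<in> SG VI" "S \<notin> x" "card S \<le> m"
      using TSD_misses_small_generator[OF assms x] .
    have "x \<subseteq> SG VI - {S} \<and> SG VI - {S} \<noteq> SG VI"
      using TSD_subset_SG[OF x(1)] S(1,2) by auto
    then have "x = SG VI - {S}"
      by (rule max[OF SG_Diff_small_in_TSD[OF assms S(1,3)]])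
    with S show "x \<in> {SG VI - {S} | S. S \<in> SG VI \<and> card S \<le> m}" by blast
  qed
  show "{SG VI - {S} | S. S \<in> SG VI \<and> card S \<le> m} \<subseteq> dAtoms (TSD m VI) (SG VI)"
  proof
    fix x assume "x \<in> {SG VI - {S} | S. S \<in> SG VI \<and> card S \<le> m}"
    then obtain S where S: "S \<in> SG VI" "card S \<le> m" and x: "x = SG VI - {S}" by blast
    have "TSD m VI \<subseteq> Pow (SG VI)" using TSD_subset_SG by blast
    with S show "x \<in> dAtoms (TSD m VI) (SG VI)"
      unfolding x by (intro Diff_singleton_in_dAtoms SG_Diff_small_in_TSD[OF assms])
  qed
qed

lemma MI_TSD_inter_TSD_coatom:
  assumes "finite VI" and "j < k"
    and x: "x \<in> TSD j VI" and irred: "x \<in> MI (TSD k VI) (SG VI)"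
  obtains S where "S \<in> SG VI" "card S \<le> j" "x = SG VI - {S}"
proof -
  have "x \<noteq> SG VI" using irred unfolding MI_def by blast
  then obtain S where S: "S \<in> SG VI" "S \<notin> x" "card S \<le> j"
    using TSD_misses_small_generator[OF assms(1) x] by blast
  define y where "y = SG VI - {S}"
  define z where "z = rho_TSD k VI (insert S x)"
  have "y \<in> TSD k VI"
    unfolding y_def using SG_Diff_small_in_TSD[OF assms(1) S(1)] S(3) assms(2) by simp
  moreover have "z \<in> TSD k VI"
    unfolding z_def by (rule rho_TSD_in_TSD)
  moreover have z_sup: "insert S x \<subseteq> z"
    unfolding z_def using S(1) TSD_subset_SG[OF x] by (intro rho_TSD_extensive) blast
  moreover have "x = y \<inter> z"
  proof
    have "z - {S} \<subseteq> x"
      using rho_TSD_insert_subset[OF assms(2)] x unfolding z_def TSD_iff_fixpoint by blast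
    then show "y \<inter> z \<subseteq> x" unfolding y_def by blast
    show "x \<subseteq> y \<inter> z" using z_sup S(2) TSD_subset_SG[OF x] unfolding y_def by blast
  qed
  ultimately have "x = y \<or> x = z"
    using irred unfolding MI_def by blast
  then have "x = y" using z_sup S(2) by blast
  with S that show thesis unfolding y_def by blast
qed

theorem corollary4p6:
  fixes VI :: "'a set" and n j k :: nat
  assumes "finite VI" and "card VI = n"
    and "1 \<le> j" and "j < k" and "k \<le> n"
  shows "MI (TSD k VI) (SG VI) \<inter> TSD j VI = dAtoms (TSD j VI) (SG VI)"
proof -
  let ?coatoms = "{SG VI - {S} | S. S \<in> SG VI \<and> card S \<le> j}"
  have "MI (TSD k VI) (SG VI) \<inter> TSD j VI \<subseteq> ?coatoms"
    using MI_TSD_inter_TSD_coatom[OF assms(1,4)] by blast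
  moreover have "?coatoms \<subseteq> MI (TSD k VI) (SG VI) \<inter> TSD j VI"
  proof
    fix x assume "x \<in> ?coatoms"
    then obtain S where S: "S \<in> SG VI" "card S \<le> j" and x: "x = SG VI - {S}" by blast
    have "TSD k VI \<subseteq> Pow (SG VI)" using TSD_subset_SG by blast
    moreover have "SG VI - {S} \<in> TSD k VI" "SG VI - {S} \<in> TSD j VI"
      using SG_Diff_small_in_TSD[OF assms(1) S(1)] S(2) assms(4) by simp_all
    ultimately show "x \<in> MI (TSD k VI) (SG VI) \<inter> TSD j VI"
      unfolding x using Diff_singleton_in_MI[OF _ _ S(1)] by blast
  qed
  ultimately show ?thesis
    unfolding dAtoms_TSD[OF assms(1)] by (rule subset_antisym)
qed

end
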